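(* Consider the NPMC-CX procedure described below and suppose Assumptions (A2'), (A3), (A4) hold. Then for any bounded set $\Lambda\subseteq\mathbb R_+^{|\mathcal A|}$, $$\lim_{n\to\infty}\sup_{\lambda\in\Lambda}\big|F_\lambda(\hat\phi_\lambda)-F_\lambda(\phi^*_\lambda)\big|=0\quad\text{almost surely.}$$
   Context: Setting. $(X,Y)$ random pair, $X\in\mathcal X\subseteq\mathbb R^p$, $Y\in\{1,\dots,K\}$, $\pi_k^*=\mathbb P(Y=k)\in(0,1)$; training data $(x_i,y_i)_{i=1}^n$ i.i.d. copies. $R_k(\phi)=\mathbb P_{X|Y=k}(\phi(X)\ne k)$ (for data-dependent $\phi$, evaluated with $\phi$ held fixed). Fix $\mathcal A\subseteq\{1,\dots,K\}$, $\alpha_k\in[0,1)$ ($k\in\mathcal A$), $w_k\ge0$. $c_k(\lambda,\pi)=w_k/\pi_k$ ($k\notin\mathcal A$), $(w_k+\lambda_k)/\pi_k$ ($k\in\mathcal A$); $F_\lambda(\phi)=\sum_kw_kR_k(\phi)+\sum_{k\in\mathcal A}\lambda_k(R_k(\phi)-\alpha_k)$; $\phi^*_\lambda(x)\in\arg\max_kc_k(\lambda,\pi^* )\mathbb P_{Y|X=x}(Y=k)$; $G(\lambda)=F_\lambda(\phi^*_\lambda)$; $\lambda^*=\arg\max_{\lambda\in\mathbb R_+^{|\mathcal A|}}G(\lambda)$. NPMC-CX: $\widehat{\mathbb P}_{Y|X=x}(Y=k)=\mathbb P_{Y|X=x}(Y=k;\hat\beta)$ from a parametric family indexed by $\beta$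 in a compact set of a fixed-dimensional Euclidean space, $\hat\beta$ from the training data; $\hat\pi_k=n_k/n$ with $n_k=\#\{i:y_i=k\}$; $\hat\phi_\lambda(x)\in\arg\max_kc_k(\lambda,\hat\pi)\widehat{\mathbb P}_{Y|X=x}(Y=k)$. Assumptions. (A2') for all $k$ and almost every $x$, $\lim_{n\to\infty}\widehat{\mathbb P}_{Y|X=x}(Y=k)=\mathbb P_{Y|X=x}(Y=k)$ a.s. w.r.t. the training data. (A3) $G$ twice continuously differentiable at $\lambda^*$ with $\nabla^2G(\lambda^* )$ negative definite. (A4) for almost all $x$, $\mathbb P_{Y|X=x}(Y=k;\beta)$ continuous in $\beta$. *)

theory Defs
  imports "HOL-Probability.Probability"
begin

definition prior :: "('x \<times> 'k) measure \<Rightarrow> 'k \<Rightarrow> real" where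
  "prior D k = measure D {z \<in> space D. snd z = k}"

definition Rk :: "('x \<times> 'k) measure \<Rightarrow> 'k \<Rightarrow> ('x \<Rightarrow> 'k) \<Rightarrow> real" where
  "Rk D k \<phi> = measure D {z \<in> space D. \<phi> (fst z) \<noteq> k \<and> snd z = k} / prior D k"

definition cost :: "('k::finite \<Rightarrow> real) \<Rightarrow> 'k set \<Rightarrow> real^'k \<Rightarrow> ('k \<Rightarrow> real) \<Rightarrow> 'k \<Rightarrow> real" where
  "cost w A lam p k = (if k \<in> A then (w k + lam $ k) / p k else w k / p k)"

definition Flag :: "('k::finite \<Rightarrow> real) \<Rightarrow> 'k set \<Rightarrow> ('k \<Rightarrow> real) \<Rightarrow> ('x \<times> 'k) measure
    \<Rightarrow> real^'k \<Rightarrow> ('x \<Rightarrow> 'k) \<Rightarrow> real" where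
  "Flag w A \<alpha> D lam \<phi> = (\<Sum>k\<in>UNIV. w k * Rk D k \<phi>) + (\<Sum>k\<in>A. lam $ k * (Rk D k \<phi> - \<alpha> k))"

definition argmax_set :: "('k \<Rightarrow> real) \<Rightarrow> 'k set" where
  "argmax_set f = {k. \<forall>j. f j \<le> f k}"

text \<open>R_+^{|A|}, embedded in real^'k with zero coordinates outside A; and its linear span.\<close>
definition lam_space :: "'k::finite set \<Rightarrow> (real^'k) set" where
  "lam_space A = {lam. \<forall>k. 0 \<le> lam $ k \<and> (k \<notin> A \<longrightarrow> lam $ k = 0)}"

definition lam_subspace :: "'k::finite set \<Rightarrow> (real^'k) set" where
  "lam_subspace A = {lam. \<forall>k. k \<notin> A \<longrightarrow> lam $ k = 0}"

text \<open>eta x k is a version of P(Y = k | X = x) (regular conditional probability).\<close>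
definition is_posterior :: "('x::topological_space \<times> 'k) measure \<Rightarrow> ('x \<Rightarrow> 'k \<Rightarrow> real) \<Rightarrow> bool" where
  "is_posterior D \<eta> \<longleftrightarrow> (\<forall>k. (\<lambda>x. \<eta> x k) \<in> borel_measurable borel) \<and>
     (\<forall>k. \<forall>B \<in> sets borel. measure D {z \<in> space D. fst z \<in> B \<and> snd z = k}
          = (\<integral>x. indicator B x * \<eta> x k \<partial>(distr D borel fst)))"

definition pi_hat :: "(nat \<Rightarrow> 'w \<Rightarrow> 'x \<times> 'k) \<Rightarrow> nat \<Rightarrow> 'w \<Rightarrow> 'k \<Rightarrow> real" where
  "pi_hat Z n \<omega> k = real (card {i. i < n \<and> snd (Z i \<omega>) = k}) / real n"

definition twice_cont_diff_negdef_at ::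
  "(real^'k \<Rightarrow> real) \<Rightarrow> (real^'k) set \<Rightarrow> (real^'k) set \<Rightarrow> real^'k \<Rightarrow> bool" where
  "twice_cont_diff_negdef_at G L S l0 \<longleftrightarrow>
     (\<exists>e>0. \<exists>G' G''.
        (\<forall>l \<in> L \<inter> ball l0 e.
            (G has_derivative blinfun_apply (G' l)) (at l within L) \<and>
            (G' has_derivative blinfun_apply (G'' l)) (at l within L)) \<and>
        continuous (at l0 within L) G'' \<and>
        (\<forall>h \<in> S. h \<noteq> 0 \<longrightarrow> blinfun_apply (blinfun_apply (G'' l0) h) h < 0))"

end

theory Submission
  imports Defs
begin

(* With the costs c_k = c_k(lambda, pi) at the true priors pi, the risk is an expected score:
   F_lambda(phi) = sum_k (w_k + lambda_k) - sum_{k in A} lambda_k alpha_k - E[c_{phi(X)} eta_{phi(X)}(X)].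
   Hence F_lambda(hat phi_lambda) - F_lambda(phi*_lambda) is the expected score lost by maximising the
   estimated scores instead of the true ones; pointwise it lies between 0 and
   2 sum_k (w_k + R) |eta_k(x) / pi_k - hat eta_k(x) / hat pi_k|, where R bounds Lambda, so the bound is
   uniform in lambda.  Almost surely hat pi -> pi (Hoeffding and Borel-Cantelli), and hat eta(x) -> eta(x)
   for almost every x simultaneously: (A2') gives this only for each x separately, but the estimated
   parameters stay in a compact set on which beta |-> P(Y = k | X = x; beta) is continuous, and then
   convergence at a suitable countable family of points x (Lindeloef) forces it at all of them.
   Dominated convergence gives the uniform convergence. *)

lemma tendsto_of_subseq_limits:
  fixes b :: "nat \<Rightarrow> 'b::metric_space" and f :: "'b \<Rightarrow> 'c::metric_space"
  assumes S: "compact S" "\<And>n. b n \<in> S" and f: "continuous_on S f"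
    and limits: "\<And>l r. l \<in> S \<Longrightarrow> strict_mono r \<Longrightarrow> (b \<circ> r) \<longlonglongrightarrow> l \<Longrightarrow> f l = c"
  shows "(\<lambda>n. f (b n)) \<longlonglongrightarrow> c"
proof (rule ccontr)
  assume "\<not> (\<lambda>n. f (b n)) \<longlonglongrightarrow> c"
  then obtain e where e: "e > 0" "\<not> eventually (\<lambda>n. dist (f (b n)) c < e) sequentially"
    unfolding tendsto_iff by blast
  obtain r :: "nat \<Rightarrow> nat" where r: "strict_mono r" "\<And>n. e \<le> dist (f (b (r n))) c"
    using not_eventually_sequentiallyD[OF e(2)] unfolding not_less by blast
  obtain l s where l: "l \<in> S" "strict_mono s" "(b \<circ> r \<circ> s) \<longlonglongrightarrow> l"
    using S unfolding compact_def by (metis comp_apply)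
  have "(f \<circ> (b \<circ> r \<circ> s)) \<longlonglongrightarrow> f l"
    using f l S(2) unfolding continuous_on_sequentially by simp
  then have "(\<lambda>n. dist (f (b (r (s n)))) c) \<longlonglongrightarrow> dist (f l) c"
    by (intro tendsto_dist) (auto simp: o_def)
  then have "e \<le> dist (f l) c"
    by (rule tendsto_lowerbound) (use r in auto)
  moreover have "f l = c"
    by (rule limits[OF l(1), of "r \<circ> s"]) (use r(1) l in \<open>simp_all add: strict_mono_o o_assoc\<close>)
  ultimately show False
    using e(1) by simp
qed

lemma continuous_on_subseq_limit:
  fixes b :: "nat \<Rightarrow> 'b::metric_space" and g :: "'b \<Rightarrow> 'c::metric_space"
  assumes "continuous_on S g" "\<And>n. b n \<in> S" "l \<in> S"
    and "strict_mono r" "(b \<circ> r) \<longlonglongrightarrow> l" "(\<lambda>n. g (b n)) \<longlonglongrightarrow> d"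
  shows "g l = d"
proof (rule LIMSEQ_unique)
  have "\<forall>n. (b \<circ> r) n \<in> S"
    using assms(2) by simp
  then show "(g \<circ> (b \<circ> r)) \<longlonglongrightarrow> g l"
    using assms(1,3,5) unfolding continuous_on_sequentially by blast
  show "(g \<circ> (b \<circ> r)) \<longlonglongrightarrow> d"
    using LIMSEQ_subseq_LIMSEQ[OF assms(6,4)] by (simp add: o_def)
qed

lemma AE_tendsto_continuous_family:
  fixes \<beta> :: "nat \<Rightarrow> 'a \<Rightarrow> 'b::{metric_space,second_countable_topology}"
    and f :: "'i \<Rightarrow> 'b \<Rightarrow> 'c::metric_space"
  assumes S: "compact S" "\<And>n \<omega>. \<beta> n \<omega> \<in> S"
    and f: "\<And>i. i \<in> I \<Longrightarrow> continuous_on S (f i)"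
    and conv: "\<And>i. i \<in> I \<Longrightarrow> AE \<omega> in M. (\<lambda>n. f i (\<beta> n \<omega>)) \<longlonglongrightarrow> c i"
  shows "AE \<omega> in M. \<forall>i\<in>I. (\<lambda>n. f i (\<beta> n \<omega>)) \<longlonglongrightarrow> c i"
proof -
  define bad where "bad i = S \<inter> f i -` (- {c i})" for i
  have "openin (top_of_set S) (bad i)" if "i \<in> I" for i
    unfolding bad_def using f[OF that] by (intro continuous_openin_preimage_gen) auto
  then have "\<And>T. T \<in> bad ` I \<Longrightarrow> openin (top_of_set S) T"
    by blast
  then obtain \<F> where \<F>: "\<F> \<subseteq> bad ` I" "countable \<F>" "\<Union>\<F> = \<Union>(bad ` I)"
    by (rule Lindelof_openin)
  then obtain J where J: "countable J" "J \<subseteq> I" "\<F> = bad ` J"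
    using countable_subset_image[of \<F> bad I] by blast
  have "AE \<omega> in M. \<forall>j\<in>J. (\<lambda>n. f j (\<beta> n \<omega>)) \<longlonglongrightarrow> c j"
    using J conv by (subst AE_ball_countable) auto
  then show ?thesis
  proof (rule eventually_mono, intro ballI)
    fix \<omega> i
    assume conv_J: "\<forall>j\<in>J. (\<lambda>n. f j (\<beta> n \<omega>)) \<longlonglongrightarrow> c j" and i: "i \<in> I"
    show "(\<lambda>n. f i (\<beta> n \<omega>)) \<longlonglongrightarrow> c i"
    proof (rule tendsto_of_subseq_limits[OF S(1) S(2) f[OF i]])
      fix l r assume l: "l \<in> S" "strict_mono r" "((\<lambda>n. \<beta> n \<omega>) \<circ> r) \<longlonglongrightarrow> l"
      have "f j l = c j" if "j \<in> J" for j
        using continuous_on_subseq_limit[OF f[of j] S(2) l] conv_J that J(2) by blast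
      then have "l \<notin> bad j" if "j \<in> J" for j
        using that unfolding bad_def by blast
      then have "l \<notin> bad i"
        using \<F>(3) J(3) i by blast
      then show "f i l = c i"
        using l(1) unfolding bad_def by blast
    qed
  qed
qed

lemma (in prob_space) AE_tendsto_of_summable_deviations:
  fixes Y :: "nat \<Rightarrow> 'a \<Rightarrow> real"
  assumes Y: "\<And>n. random_variable borel (Y n)"
    and summable: "\<And>e. e > 0 \<Longrightarrow> summable (\<lambda>n. prob {\<omega> \<in> space M. e \<le> \<bar>Y n \<omega> - \<mu>\<bar>})"
  shows "AE \<omega> in M. (\<lambda>n. Y n \<omega>) \<longlonglongrightarrow> \<mu>"
proof -
  define dev where "dev m n = {\<omega> \<in> space M. 1 / Suc m \<le> \<bar>Y n \<omega> - \<mu>\<bar>}" for m n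
  have "AE \<omega> in M. eventually (\<lambda>n. \<omega> \<in> space M - dev m n) sequentially" for m
    unfolding dev_def using Y by (intro borel_cantelli_AE1 summable) (auto simp: emeasure_eq_measure)
  then have "AE \<omega> in M. \<forall>m. eventually (\<lambda>n. \<omega> \<in> space M - dev m n) sequentially"
    by (simp add: AE_all_countable)
  then show ?thesis
  proof (rule eventually_mono)
    fix \<omega> assume ev: "\<forall>m. eventually (\<lambda>n. \<omega> \<in> space M - dev m n) sequentially"
    show "(\<lambda>n. Y n \<omega>) \<longlonglongrightarrow> \<mu>"
    proof (rule LIMSEQ_I)
      fix e :: real assume "e > 0"
      then obtain m where m: "1 / Suc m < e"
        by (metis inverse_eq_divide reals_Archimedean)
      from ev[rule_format, of m] obtain N where "\<And>n. n \<ge> N \<Longrightarrow> \<omega> \<in> space M - dev m n"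
        unfolding eventually_sequentially by blast
      then show "\<exists>N. \<forall>n\<ge>N. norm (Y n \<omega> - \<mu>) < e"
        using m unfolding dev_def by force
    qed
  qed
qed

lemma (in prob_space) AE_tendsto_average_iid_unit_interval:
  fixes X :: "nat \<Rightarrow> 'a \<Rightarrow> real"
  assumes indep: "indep_vars (\<lambda>_. borel) X UNIV"
    and ident: "\<And>i. distr M borel (X i) = distr M borel (X 0)"
    and range: "\<And>i \<omega>. X i \<omega> \<in> {0..1::real}"
  shows "AE \<omega> in M. (\<lambda>n. (\<Sum>i<n. X i \<omega>) / n) \<longlonglongrightarrow> expectation (X 0)"
proof (rule AE_tendsto_of_summable_deviations)
  have X [measurable]: "random_variable borel (X i)" for i
    using indep unfolding indep_vars_def by blast
  show "random_variable borel (\<lambda>\<omega>. (\<Sum>i<n. X i \<omega>) / n)" for n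
    by measurable
  fix e :: real assume "e > 0"
  define \<rho> where "\<rho> = exp (-2 * e\<^sup>2)"
  have hoeffding: "prob {\<omega> \<in> space M. e \<le> \<bar>(\<Sum>i<n. X i \<omega>) / n - expectation (X 0)\<bar>} \<le> 2 * \<rho> ^ n"
    for n
  proof (cases "n = 0")
    case False
    interpret Hoeffding_ineq_iid M "{..<n}" X "X 0" 0 1 "expectation (X 0)"
    proof unfold_locales
      show "indep_vars (\<lambda>_. borel) X {..<n}"
        using indep_vars_subset[OF indep] by blast
      show "distr M borel (X i) = distr M borel (X 0)" for i
        by (rule ident)
      show "AE \<omega> in M. X 0 \<omega> \<in> {0..1}"
        using range by simp
    qed (simp_all add: X)
    have "prob {\<omega> \<in> space M. e \<le> \<bar>(\<Sum>i<n. X i \<omega>) / real (card {..<n}) - expectation (X 0)\<bar>}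
        \<le> 2 * exp (-2 * real (card {..<n}) * e\<^sup>2 / (1 - 0)\<^sup>2)"
      by (rule Hoeffding_ineq_abs_ge') (use \<open>e > 0\<close> False in auto)
    also have "exp (-2 * real (card {..<n}) * e\<^sup>2 / (1 - 0)\<^sup>2) = \<rho> ^ n"
      unfolding \<rho>_def by (simp add: exp_of_nat_mult[symmetric] mult_ac)
    finally show ?thesis
      by simp
  qed (auto intro: order_trans[OF prob_le_1])
  have "summable (\<lambda>n. 2 * \<rho> ^ n)"
    using \<open>e > 0\<close> by (intro summable_mult summable_geometric) (simp add: \<rho>_def)
  then show "summable (\<lambda>n. prob {\<omega> \<in> space M. e \<le> \<bar>(\<Sum>i<n. X i \<omega>) / n - expectation (X 0)\<bar>})"
    by (rule summable_comparison_test') (simp add: hoeffding)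
qed

lemma pi_hat_tendsto_prior:
  fixes Z :: "nat \<Rightarrow> 'w \<Rightarrow> 'x::topological_space \<times> 'k"
  assumes M: "prob_space M"
    and indep: "prob_space.indep_vars M (\<lambda>_. borel \<Otimes>\<^sub>M count_space UNIV) Z UNIV"
    and ident: "\<And>i. distr M (borel \<Otimes>\<^sub>M count_space UNIV) (Z i) = D"
  shows "AE \<omega> in M. (\<lambda>n. pi_hat Z n \<omega> k) \<longlonglongrightarrow> prior D k"
proof -
  interpret prob_space M by (rule M)
  define Y :: "'x \<times> 'k \<Rightarrow> real" where "Y z = of_bool (snd z = k)" for z
  have Y [measurable]: "Y \<in> borel_measurable (borel \<Otimes>\<^sub>M count_space UNIV)"
    unfolding Y_def by measurable
  have Z [measurable]: "Z i \<in> M \<rightarrow>\<^sub>M borel \<Otimes>\<^sub>M count_space UNIV" for i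
    using indep unfolding indep_vars_def by blast
  have distr_Y: "distr M borel (\<lambda>\<omega>. Y (Z i \<omega>)) = distr D borel Y" for i
    using distr_distr[OF Y Z, of i] by (simp add: ident o_def)
  have "expectation (\<lambda>\<omega>. Y (Z 0 \<omega>)) = (\<integral>z. Y z \<partial>D)"
    using integral_distr[OF Z Y, of 0] by (simp add: ident)
  also have "\<dots> = (\<integral>z. indicator {z \<in> space D. snd z = k} z \<partial>D)"
    by (intro Bochner_Integration.integral_cong) (auto simp: Y_def)
  also have "\<dots> = prior D k"
  proof -
    have D: "D = distr M (borel \<Otimes>\<^sub>M count_space UNIV) (Z 0)"
      by (simp add: ident)
    interpret D: prob_space D
      unfolding D by (rule prob_space_distr[OF Z])
    have "{z \<in> space D. snd z = k} \<in> sets D"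
      unfolding D by simp
    then show ?thesis
      unfolding prior_def by (simp add: D.emeasure_eq_measure)
  qed
  finally have mean: "expectation (\<lambda>\<omega>. Y (Z 0 \<omega>)) = prior D k" .
  have count: "(\<Sum>i<n. Y (Z i \<omega>)) = card {i. i < n \<and> snd (Z i \<omega>) = k}" for n \<omega>
    unfolding Y_def by (simp add: Int_def)
  have "AE \<omega> in M. (\<lambda>n. (\<Sum>i<n. Y (Z i \<omega>)) / n) \<longlonglongrightarrow> expectation (\<lambda>\<omega>. Y (Z 0 \<omega>))"
  proof (rule AE_tendsto_average_iid_unit_interval[of "\<lambda>i \<omega>. Y (Z i \<omega>)"])
    show "indep_vars (\<lambda>_. borel) (\<lambda>i \<omega>. Y (Z i \<omega>)) UNIV"
      using indep_vars_compose2[OF indep Y] .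
    show "distr M borel (\<lambda>\<omega>. Y (Z i \<omega>)) = distr M borel (\<lambda>\<omega>. Y (Z 0 \<omega>))" for i
      unfolding distr_Y ..
    show "Y (Z i \<omega>) \<in> {0..1}" for i \<omega>
      by (simp add: Y_def)
  qed
  then show ?thesis
    by (simp add: mean count pi_hat_def)
qed

definition score :: "('k \<Rightarrow> real) \<Rightarrow> ('x \<Rightarrow> 'k \<Rightarrow> real) \<Rightarrow> ('x \<Rightarrow> 'k) \<Rightarrow> 'x \<Rightarrow> real" where
  "score c \<eta> \<phi> x = c (\<phi> x) * \<eta> x (\<phi> x)"

lemma score_eq_sum_indicator:
  fixes c :: "'k::finite \<Rightarrow> real"
  shows "score c \<eta> \<phi> x = (\<Sum>k\<in>UNIV. indicator (\<phi> -` {k}) x * (c k * \<eta> x k))"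
proof -
  have "(\<Sum>k\<in>UNIV. indicator (\<phi> -` {k}) x * (c k * \<eta> x k))
      = (\<Sum>k\<in>UNIV. if k = \<phi> x then c k * \<eta> x k else 0)"
    by (intro sum.cong) (auto simp: indicator_def)
  then show ?thesis
    by (simp add: score_def)
qed

lemma measure_eq_integral_posterior:
  assumes "is_posterior D \<eta>" "B \<in> sets borel"
  shows "measure D {z \<in> space D. fst z \<in> B \<and> snd z = k}
       = (\<integral>x. indicator B x * \<eta> x k \<partial>distr D borel fst)"
  using assms unfolding is_posterior_def by blast

lemma prior_eq_integral_posterior:
  assumes "is_posterior D \<eta>"
  shows "prior D k = (\<integral>x. \<eta> x k \<partial>distr D borel fst)"
  using measure_eq_integral_posterior[OF assms sets.top[of borel], of k] unfolding prior_def by simp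

lemma integrable_posterior:
  assumes "is_posterior D \<eta>" "prior D k \<noteq> 0"
  shows "integrable (distr D borel fst) (\<lambda>x. \<eta> x k)"
  \<comment> \<open>a non-integrable function has Bochner integral 0, whereas this one integrates to the prior\<close>
  using assms prior_eq_integral_posterior not_integrable_integral_eq by metis

lemma integrable_indicator_posterior:
  assumes post: "is_posterior D \<eta>" and "prior D k \<noteq> 0"
    and \<phi>: "\<phi> \<in> borel \<rightarrow>\<^sub>M count_space UNIV"
  shows "integrable (distr D borel fst) (\<lambda>x. indicator (\<phi> -` B) x * \<eta> x k)"
  using integrable_mult_indicator[of "\<phi> -` B" _ "\<lambda>x. \<eta> x k"] integrable_posterior[OF post]
    measurable_sets[OF \<phi>, of B] assms(2)
  by simp

lemma Rk_eq_integral_posterior: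
  assumes post: "is_posterior D \<eta>" and prior: "prior D k \<noteq> 0"
    and \<phi>: "\<phi> \<in> borel \<rightarrow>\<^sub>M count_space UNIV"
  shows "Rk D k \<phi> = 1 - (\<integral>x. indicator (\<phi> -` {k}) x * \<eta> x k \<partial>distr D borel fst) / prior D k"
proof -
  let ?P = "distr D borel fst"
  have "measure D {z \<in> space D. \<phi> (fst z) \<noteq> k \<and> snd z = k}
      = measure D {z \<in> space D. fst z \<in> \<phi> -` (- {k}) \<and> snd z = k}"
    by (rule arg_cong[where f = "measure D"]) auto
  also have "\<dots> = (\<integral>x. indicator (\<phi> -` (- {k})) x * \<eta> x k \<partial>?P)"
    using measurable_sets[OF \<phi>, of "- {k}"] by (intro measure_eq_integral_posterior[OF post]) simp
  also have "\<dots> = (\<integral>x. \<eta> x k - indicator (\<phi> -` {k}) x * \<eta> x k \<partial>?P)"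
    by (intro Bochner_Integration.integral_cong) (auto simp: indicator_def)
  also have "\<dots> = prior D k - (\<integral>x. indicator (\<phi> -` {k}) x * \<eta> x k \<partial>?P)"
    using integrable_posterior[OF post prior] integrable_indicator_posterior[OF post prior \<phi>]
    by (simp add: prior_eq_integral_posterior[OF post])
  finally show ?thesis
    unfolding Rk_def using prior by (simp add: diff_divide_distrib)
qed

lemma borel_measurable_score:
  fixes c :: "'k::finite \<Rightarrow> real"
  assumes post: "is_posterior D \<eta>" and \<phi>: "\<phi> \<in> borel \<rightarrow>\<^sub>M count_space UNIV"
  shows "score c \<eta> \<phi> \<in> borel_measurable borel"
proof -
  have "(\<lambda>x. \<eta> x k) \<in> borel_measurable borel" for k
    using post unfolding is_posterior_def by blast
  moreover have "\<phi> -` {k} \<in> sets borel" for k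
    using measurable_sets[OF \<phi>, of "{k}"] by simp
  ultimately show ?thesis
    unfolding score_eq_sum_indicator[abs_def] by measurable
qed

lemma cost_eq_on_lam_space:
  assumes "lam \<in> lam_space A"
  shows "cost w A lam p k = (w k + lam $ k) / p k"
  using assms unfolding cost_def lam_space_def by auto

lemma Flag_eq_expected_score:
  fixes D :: "('x::topological_space \<times> 'k::finite) measure"
  assumes post: "is_posterior D \<eta>" and prior: "\<And>k. prior D k \<noteq> 0"
    and lam: "lam \<in> lam_space A" and \<phi>: "\<phi> \<in> borel \<rightarrow>\<^sub>M count_space UNIV"
  shows "Flag w A \<alpha> D lam \<phi> = (\<Sum>k\<in>UNIV. w k + lam $ k) - (\<Sum>k\<in>A. lam $ k * \<alpha> k)
           - (\<integral>x. score (cost w A lam (prior D)) \<eta> \<phi> x \<partial>distr D borel fst)"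
proof -
  let ?P = "distr D borel fst" and ?c = "cost w A lam (prior D)"
  define I where "I k = (\<integral>x. indicator (\<phi> -` {k}) x * \<eta> x k \<partial>?P)" for k
  have "(\<Sum>k\<in>A. lam $ k * Rk D k \<phi>) = (\<Sum>k\<in>UNIV. lam $ k * Rk D k \<phi>)"
    using lam by (intro sum.mono_neutral_left) (auto simp: lam_space_def)
  then have "Flag w A \<alpha> D lam \<phi>
      = (\<Sum>k\<in>UNIV. (w k + lam $ k) * Rk D k \<phi>) - (\<Sum>k\<in>A. lam $ k * \<alpha> k)"
    unfolding Flag_def by (simp add: algebra_simps sum.distrib sum_subtractf)
  also have "(\<Sum>k\<in>UNIV. (w k + lam $ k) * Rk D k \<phi>)
      = (\<Sum>k\<in>UNIV. w k + lam $ k) - (\<Sum>k\<in>UNIV. ?c k * I k)"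
  proof -
    have "(w k + lam $ k) * Rk D k \<phi> = (w k + lam $ k) - ?c k * I k" for k
      unfolding Rk_eq_integral_posterior[OF post prior \<phi>] cost_eq_on_lam_space[OF lam] I_def
      using prior[of k] by (simp add: field_simps)
    then show ?thesis
      by (simp add: sum_subtractf)
  qed
  also have "(\<Sum>k\<in>UNIV. ?c k * I k) = (\<integral>x. score ?c \<eta> \<phi> x \<partial>?P)"
    using integrable_indicator_posterior[OF post prior \<phi>]
    by (simp add: score_eq_sum_indicator I_def mult.left_commute)
  finally show ?thesis
    by simp
qed

lemma integrable_score:
  fixes D :: "('x::topological_space \<times> 'k::finite) measure" and c :: "'k \<Rightarrow> real"
  assumes post: "is_posterior D \<eta>" and prior: "\<And>k. prior D k \<noteq> 0"
    and \<phi>: "\<phi> \<in> borel \<rightarrow>\<^sub>M count_space UNIV"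
  shows "integrable (distr D borel fst) (score c \<eta> \<phi>)"
  unfolding score_eq_sum_indicator[abs_def]
  using integrable_indicator_posterior[OF post prior \<phi>] by (simp add: mult.left_commute)

lemma Flag_diff_eq_integral_score:
  fixes D :: "('x::topological_space \<times> 'k::finite) measure"
  assumes post: "is_posterior D \<eta>" and prior: "\<And>k. prior D k \<noteq> 0" and lam: "lam \<in> lam_space A"
    and \<phi>: "\<phi> \<in> borel \<rightarrow>\<^sub>M count_space UNIV" and \<psi>: "\<psi> \<in> borel \<rightarrow>\<^sub>M count_space UNIV"
  shows "Flag w A \<alpha> D lam \<psi> - Flag w A \<alpha> D lam \<phi>
      = (\<integral>x. score (cost w A lam (prior D)) \<eta> \<phi> x - score (cost w A lam (prior D)) \<eta> \<psi> x
           \<partial>distr D borel fst)"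
  using integrable_score[OF post prior \<phi>] integrable_score[OF post prior \<psi>]
  by (simp add: Flag_eq_expected_score[OF post prior lam] \<phi> \<psi>)

lemma argmax_set_regret_le:
  fixes u v :: "'k::finite \<Rightarrow> real"
  assumes j: "j \<in> argmax_set u" and j': "j' \<in> argmax_set v"
  shows "0 \<le> u j - u j'" and "u j - u j' \<le> 2 * (\<Sum>k\<in>UNIV. \<bar>u k - v k\<bar>)"
proof -
  show "0 \<le> u j - u j'"
    using j unfolding argmax_set_def by simp
  have "\<bar>u i - v i\<bar> \<le> (\<Sum>k\<in>UNIV. \<bar>u k - v k\<bar>)" for i
    by (rule member_le_sum) auto
  then have "u j - v j \<le> (\<Sum>k\<in>UNIV. \<bar>u k - v k\<bar>)" "v j' - u j' \<le> (\<Sum>k\<in>UNIV. \<bar>u k - v k\<bar>)"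
    by (metis abs_le_D1, metis abs_le_D2 minus_diff_eq)
  moreover have "v j \<le> v j'"
    using j' unfolding argmax_set_def by simp
  ultimately show "u j - u j' \<le> 2 * (\<Sum>k\<in>UNIV. \<bar>u k - v k\<bar>)"
    by linarith
qed

lemma abs_cost_mult_diff_le:
  assumes lam: "lam \<in> lam_space A" and "0 \<le> w k" "lam $ k \<le> R"
  shows "\<bar>cost w A lam p k * a - cost w A lam p' k * b\<bar> \<le> (w k + R) * \<bar>a / p k - b / p' k\<bar>"
proof -
  have "0 \<le> lam $ k"
    using lam unfolding lam_space_def by simp
  have "cost w A lam p k * a - cost w A lam p' k * b = (w k + lam $ k) * (a / p k - b / p' k)"
    unfolding cost_eq_on_lam_space[OF lam] by (simp add: right_diff_distrib)
  then have "\<bar>cost w A lam p k * a - cost w A lam p' k * b\<bar> = (w k + lam $ k) * \<bar>a / p k - b / p' k\<bar>"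
    using assms(2) \<open>0 \<le> lam $ k\<close> by (simp add: abs_mult)
  also have "\<dots> \<le> (w k + R) * \<bar>a / p k - b / p' k\<bar>"
    using assms(3) by (intro mult_right_mono) auto
  finally show ?thesis .
qed

lemma abs_cost_mult_le_sum:
  fixes a p :: "'k::finite \<Rightarrow> real"
  assumes lam: "lam \<in> lam_space A" and w: "\<And>k. 0 \<le> w k" and R: "\<And>k. lam $ k \<le> R"
    and p: "\<And>k. 0 < p k"
  shows "\<bar>cost w A lam p j * a j\<bar> \<le> (\<Sum>k\<in>UNIV. (w k + R) / p k * \<bar>a k\<bar>)"
proof -
  have lam_nonneg: "0 \<le> lam $ k" for k
    using lam unfolding lam_space_def by simp
  have "\<bar>cost w A lam p j * a j\<bar> = (w j + lam $ j) / p j * \<bar>a j\<bar>"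
    using w[of j] lam_nonneg[of j] p[of j] by (simp add: cost_eq_on_lam_space[OF lam] abs_mult)
  also have "\<dots> \<le> (w j + R) / p j * \<bar>a j\<bar>"
    using R[of j] p[of j] by (intro mult_right_mono divide_right_mono) auto
  also have "\<dots> \<le> (\<Sum>k\<in>UNIV. (w k + R) / p k * \<bar>a k\<bar>)"
  proof (rule member_le_sum)
    fix k
    have "0 \<le> w k + R"
      using w[of k] lam_nonneg[of k] R[of k] by linarith
    then show "0 \<le> (w k + R) / p k * \<bar>a k\<bar>"
      using p[of k] by simp
  qed simp_all
  finally show ?thesis .
qed

lemma SUP_tendsto_zero_of_selections:
  fixes a :: "nat \<Rightarrow> 'l \<Rightarrow> real"
  assumes "L \<noteq> {}" and nonneg: "\<And>n l. l \<in> L \<Longrightarrow> 0 \<le> a n l" and bdd: "\<And>n. bdd_above (a n ` L)"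
    and selections: "\<And>s. (\<And>n. s n \<in> L) \<Longrightarrow> (\<lambda>n. a n (s n)) \<longlonglongrightarrow> 0"
  shows "(\<lambda>n. SUP l\<in>L. a n l) \<longlonglongrightarrow> 0"
proof -
  have "\<exists>l\<in>L. (SUP l\<in>L. a n l) - 1 / Suc n < a n l" for n
    using less_cSUP_iff[OF \<open>L \<noteq> {}\<close> bdd[of n], of "(SUP l\<in>L. a n l) - 1 / Suc n"] by simp
  then obtain s where s: "\<And>n. s n \<in> L" "\<And>n. (SUP l\<in>L. a n l) - 1 / Suc n < a n (s n)"
    by metis
  have lower: "\<forall>n. 0 \<le> (SUP l\<in>L. a n l)"
    using cSUP_upper[OF s(1) bdd] nonneg[OF s(1)] by (meson order_trans)
  have upper: "\<forall>n. (SUP l\<in>L. a n l) \<le> a n (s n) + 1 / Suc n"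
    using s(2) by (simp add: less_imp_le diff_less_eq)
  have "(\<lambda>n. a n (s n) + 1 / Suc n) \<longlonglongrightarrow> 0"
    using tendsto_add[OF selections[OF s(1)] LIMSEQ_inverse_real_of_nat] by (simp add: inverse_eq_divide)
  from tendsto_sandwich[OF always_eventually[OF lower] always_eventually[OF upper] tendsto_const this]
  show ?thesis .
qed

lemma integral_SUP_tendsto_zero:
  fixes F :: "nat \<Rightarrow> 'l \<Rightarrow> 'x \<Rightarrow> real"
  assumes "L \<noteq> {}" and meas: "\<And>n l. l \<in> L \<Longrightarrow> F n l \<in> borel_measurable P"
    and g: "integrable P g"
    and bounds: "\<And>n l x. l \<in> L \<Longrightarrow> x \<in> space P \<Longrightarrow> 0 \<le> F n l x \<and> F n l x \<le> g x"
    and h: "\<And>n l x. l \<in> L \<Longrightarrow> x \<in> space P \<Longrightarrow> F n l x \<le> h n x"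
    and h_tendsto: "AE x in P. (\<lambda>n. h n x) \<longlonglongrightarrow> 0"
  shows "(\<lambda>n. SUP l\<in>L. integral\<^sup>L P (F n l)) \<longlonglongrightarrow> 0"
proof (rule SUP_tendsto_zero_of_selections[OF \<open>L \<noteq> {}\<close>])
  have integrable: "integrable P (F n l)" if "l \<in> L" for n l
    using bounds[OF that] by (intro Bochner_Integration.integrable_bound[OF g meas[OF that]] AE_I2)
      (metis abs_ge_self abs_of_nonneg order_trans real_norm_def)
  show "0 \<le> integral\<^sup>L P (F n l)" if "l \<in> L" for n l
    using bounds[OF that] by (intro integral_nonneg_AE) auto
  show "bdd_above ((\<lambda>l. integral\<^sup>L P (F n l)) ` L)" for n
  proof (rule bdd_aboveI2)
    fix l assume "l \<in> L"
    then show "integral\<^sup>L P (F n l) \<le> integral\<^sup>L P g"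
      using bounds by (intro integral_mono[OF integrable g]) auto
  qed
  \<comment> \<open>h n need not be measurable, so dominated convergence is applied to F along selections\<close>
  fix s :: "nat \<Rightarrow> 'l" assume s: "\<And>n. s n \<in> L"
  have "(\<lambda>n. integral\<^sup>L P (F n (s n))) \<longlonglongrightarrow> integral\<^sup>L P (\<lambda>x. 0)"
  proof (rule integral_dominated_convergence[OF _ meas[OF s] g])
    show "AE x in P. norm (F n (s n) x) \<le> g x" for n
      using bounds[OF s] by (intro AE_I2) auto
    show "AE x in P. (\<lambda>n. F n (s n) x) \<longlonglongrightarrow> 0"
      using h_tendsto
    proof (rule AE_mp[OF _ AE_I2[OF impI]])
      fix x assume x: "x \<in> space P" and "(\<lambda>n. h n x) \<longlonglongrightarrow> 0"
      have "\<forall>n. 0 \<le> F n (s n) x" "\<forall>n. F n (s n) x \<le> h n x"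
        using bounds[OF s x] h[OF s x] by simp_all
      from tendsto_sandwich[OF always_eventually[OF this(1)] always_eventually[OF this(2)] tendsto_const
          \<open>(\<lambda>n. h n x) \<longlonglongrightarrow> 0\<close>]
      show "(\<lambda>n. F n (s n) x) \<longlonglongrightarrow> 0" .
    qed
  qed simp
  then show "(\<lambda>n. integral\<^sup>L P (F n (s n))) \<longlonglongrightarrow> 0"
    by simp
qed

lemma Flag_plugin_SUP_tendsto_zero:
  fixes D :: "('x::topological_space \<times> 'k::finite) measure"
    and p :: "nat \<Rightarrow> 'k \<Rightarrow> real" and r :: "nat \<Rightarrow> 'x \<Rightarrow> 'k \<Rightarrow> real"
  assumes post: "is_posterior D \<eta>" and prior: "\<And>k. 0 < prior D k" and w: "\<And>k. 0 \<le> w k"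
    and \<Lambda>: "\<Lambda> \<subseteq> lam_space A" "bounded \<Lambda>" "\<Lambda> \<noteq> {}"
    and \<phi>: "\<And>lam x. lam \<in> \<Lambda> \<Longrightarrow> \<phi> lam x \<in> argmax_set (\<lambda>k. cost w A lam (prior D) k * \<eta> x k)"
      "\<And>lam. lam \<in> \<Lambda> \<Longrightarrow> \<phi> lam \<in> borel \<rightarrow>\<^sub>M count_space UNIV"
    and \<psi>: "\<And>n lam x. lam \<in> \<Lambda> \<Longrightarrow> \<psi> n lam x \<in> argmax_set (\<lambda>k. cost w A lam (p n) k * r n x k)"
      "\<And>n lam. lam \<in> \<Lambda> \<Longrightarrow> \<psi> n lam \<in> borel \<rightarrow>\<^sub>M count_space UNIV"
    and p: "\<And>k. (\<lambda>n. p n k) \<longlonglongrightarrow> prior D k"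
    and r: "AE x in distr D borel fst. \<forall>k. (\<lambda>n. r n x k) \<longlonglongrightarrow> \<eta> x k"
  shows "(\<lambda>n. SUP lam\<in>\<Lambda>. \<bar>Flag w A \<alpha> D lam (\<psi> n lam) - Flag w A \<alpha> D lam (\<phi> lam)\<bar>) \<longlonglongrightarrow> 0"
proof -
  let ?P = "distr D borel fst" and ?c = "\<lambda>lam. cost w A lam (prior D)"
  obtain R where R: "\<And>lam k. lam \<in> \<Lambda> \<Longrightarrow> lam $ k \<le> R"
    using \<Lambda>(2) unfolding bounded_iff by (meson abs_le_D1 component_le_norm_cart order_trans)
  have prior_ne: "prior D k \<noteq> 0" for k
    using prior[of k] by simp
  define F where "F n lam x = score (?c lam) \<eta> (\<phi> lam) x - score (?c lam) \<eta> (\<psi> n lam) x" for n lam x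
  define g where "g x = 2 * (\<Sum>k\<in>UNIV. (w k + R) / prior D k * \<bar>\<eta> x k\<bar>)" for x
  define h where "h n x = 2 * (\<Sum>k\<in>UNIV. (w k + R) * \<bar>\<eta> x k / prior D k - r n x k / p n k\<bar>)" for n x
  have regret: "0 \<le> F n lam x \<and> F n lam x \<le> h n x" if lam: "lam \<in> \<Lambda>" for n lam x
  proof -
    have "(\<Sum>k\<in>UNIV. \<bar>?c lam k * \<eta> x k - cost w A lam (p n) k * r n x k\<bar>)
        \<le> (\<Sum>k\<in>UNIV. (w k + R) * \<bar>\<eta> x k / prior D k - r n x k / p n k\<bar>)"
      using \<Lambda>(1) lam w R[OF lam] by (intro sum_mono abs_cost_mult_diff_le) auto
    then show ?thesis
      using argmax_set_regret_le[OF \<phi>(1)[OF lam, of x] \<psi>(1)[OF lam, of n x]] unfolding F_def h_def score_def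
      by linarith
  qed
  have dominated: "F n lam x \<le> g x" if lam: "lam \<in> \<Lambda>" for n lam x
  proof -
    have "\<bar>?c lam j * \<eta> x j\<bar> \<le> (\<Sum>k\<in>UNIV. (w k + R) / prior D k * \<bar>\<eta> x k\<bar>)" for j
      using \<Lambda>(1) lam w R[OF lam] prior by (intro abs_cost_mult_le_sum) auto
    from this[of "\<phi> lam x"] this[of "\<psi> n lam x"] show ?thesis
      unfolding F_def g_def score_def abs_le_iff by linarith
  qed
  have Flag_diff: "\<bar>Flag w A \<alpha> D lam (\<psi> n lam) - Flag w A \<alpha> D lam (\<phi> lam)\<bar> = integral\<^sup>L ?P (F n lam)"
    if lam: "lam \<in> \<Lambda>" for n lam
  proof -
    have "Flag w A \<alpha> D lam (\<psi> n lam) - Flag w A \<alpha> D lam (\<phi> lam) = integral\<^sup>L ?P (F n lam)"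
      unfolding F_def using \<Lambda>(1) lam
      by (intro Flag_diff_eq_integral_score[OF post prior_ne] \<phi>(2) \<psi>(2)) auto
    moreover have "0 \<le> integral\<^sup>L ?P (F n lam)"
      using regret[OF lam] by (intro integral_nonneg_AE AE_I2) blast
    ultimately show ?thesis
      by simp
  qed
  have h_tendsto: "AE x in ?P. (\<lambda>n. h n x) \<longlonglongrightarrow> 0"
    using r
  proof (rule eventually_mono)
    fix x assume r_x: "\<forall>k. (\<lambda>n. r n x k) \<longlonglongrightarrow> \<eta> x k"
    have "(\<lambda>n. h n x) \<longlonglongrightarrow> 2 * (\<Sum>k\<in>UNIV. (w k + R) * \<bar>\<eta> x k / prior D k - \<eta> x k / prior D k\<bar>)"
      unfolding h_def by (intro tendsto_intros r_x[rule_format] p prior_ne)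
    then show "(\<lambda>n. h n x) \<longlonglongrightarrow> 0"
      by simp
  qed
  have "(\<lambda>n. SUP lam\<in>\<Lambda>. integral\<^sup>L ?P (F n lam)) \<longlonglongrightarrow> 0"
  proof (rule integral_SUP_tendsto_zero[OF \<Lambda>(3) _ _ _ _ h_tendsto])
    show "F n lam \<in> borel_measurable ?P" if "lam \<in> \<Lambda>" for n lam
      unfolding F_def using borel_measurable_score[OF post \<phi>(2)] borel_measurable_score[OF post \<psi>(2)] that
      by simp
    show "integrable ?P g"
      unfolding g_def
      by (intro integrable_mult_right Bochner_Integration.integrable_sum integrable_abs
          integrable_posterior[OF post prior_ne])
    show "0 \<le> F n lam x \<and> F n lam x \<le> g x" "F n lam x \<le> h n x" if "lam \<in> \<Lambda>" for n lam x
      using regret[OF that] dominated[OF that] by simp_all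
  qed
  then show ?thesis
    using Flag_diff by (simp cong: SUP_cong)
qed

theorem lemma5:
  fixes D :: "((real^('p::finite)) \<times> 'k::finite) measure"
    and \<eta> :: "real^'p \<Rightarrow> 'k \<Rightarrow> real"
    and A :: "'k set" and \<alpha> w :: "'k \<Rightarrow> real"
    and M :: "'w measure" and Z :: "nat \<Rightarrow> 'w \<Rightarrow> (real^'p) \<times> 'k"
    and Bset :: "'b::euclidean_space set"
    and q :: "'b \<Rightarrow> real^'p \<Rightarrow> 'k \<Rightarrow> real"
    and est :: "((real^'p) \<times> 'k) list \<Rightarrow> 'b"
    and phis :: "real^'k \<Rightarrow> real^'p \<Rightarrow> 'k"
    and phih :: "nat \<Rightarrow> 'w \<Rightarrow> real^'k \<Rightarrow> real^'p \<Rightarrow> 'k"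
    and lamstar :: "real^'k"
    and \<Lambda> :: "(real^'k) set"
  assumes D: "prob_space D" "sets D = sets (borel \<Otimes>\<^sub>M count_space UNIV)"
    and prior: "\<And>k. 0 < prior D k \<and> prior D k < 1"
    and post: "is_posterior D \<eta>"
    and alpha: "\<And>k. k \<in> A \<Longrightarrow> 0 \<le> \<alpha> k \<and> \<alpha> k < 1"
    and wpos: "\<And>k. 0 \<le> w k"
    \<comment> \<open>training data: i.i.d. copies of (X,Y)\<close>
    and M: "prob_space M"
    and iid: "prob_space.indep_vars M (\<lambda>_. borel \<Otimes>\<^sub>M count_space UNIV) Z UNIV"
    and ident: "\<And>i. distr M (borel \<Otimes>\<^sub>M count_space UNIV) (Z i) = D"
    \<comment> \<open>parametric family on a compact parameter set, estimator from the sample\<close>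
    and Bcpt: "compact Bset"
    and qprob: "\<And>\<beta> x. \<beta> \<in> Bset \<Longrightarrow> (\<forall>k. 0 \<le> q \<beta> x k) \<and> (\<Sum>k\<in>UNIV. q \<beta> x k) = 1"
    and est: "\<And>zs. est zs \<in> Bset"
    \<comment> \<open>oracle classifier phi*_lambda (any measurable argmax selection)\<close>
    and phis: "\<And>lam x. phis lam x \<in> argmax_set (\<lambda>k. cost w A lam (prior D) k * \<eta> x k)"
    and phis_meas: "\<And>lam. phis lam \<in> borel \<rightarrow>\<^sub>M count_space UNIV"
    \<comment> \<open>plug-in classifier hat phi_lambda (any measurable argmax selection)\<close>
    and phih: "\<And>n \<omega> lam x. lam \<in> lam_space A \<Longrightarrow>
        phih n \<omega> lam x \<in> argmax_set (\<lambda>k. cost w A lam (pi_hat Z n \<omega>) k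
                                          * q (est (map (\<lambda>i. Z i \<omega>) [0..<n])) x k)"
    and phih_meas: "\<And>n \<omega> lam. lam \<in> lam_space A \<Longrightarrow> phih n \<omega> lam \<in> borel \<rightarrow>\<^sub>M count_space UNIV"
    \<comment> \<open>lambda* = argmax of G over R_+^{|A|}\<close>
    and lamstar: "lamstar \<in> lam_space A"
      "\<And>lam. lam \<in> lam_space A \<Longrightarrow> Flag w A \<alpha> D lam (phis lam) \<le> Flag w A \<alpha> D lamstar (phis lamstar)"
      "\<And>lam. lam \<in> lam_space A \<Longrightarrow> Flag w A \<alpha> D lam (phis lam) = Flag w A \<alpha> D lamstar (phis lamstar) \<Longrightarrow> lam = lamstar"
    \<comment> \<open>(A2')\<close>
    and A2': "\<And>k. AE x in distr D borel fst. AE \<omega> in M.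
        (\<lambda>n. q (est (map (\<lambda>i. Z i \<omega>) [0..<n])) x k) \<longlonglongrightarrow> \<eta> x k"
    \<comment> \<open>(A3)\<close>
    and A3: "twice_cont_diff_negdef_at (\<lambda>lam. Flag w A \<alpha> D lam (phis lam))
               (lam_space A) (lam_subspace A) lamstar"
    \<comment> \<open>(A4)\<close>
    and A4: "AE x in distr D borel fst. \<forall>k. continuous_on Bset (\<lambda>\<beta>. q \<beta> x k)"
    and Lam: "\<Lambda> \<subseteq> lam_space A" "bounded \<Lambda>" "\<Lambda> \<noteq> {}"
  shows "AE \<omega> in M. (\<lambda>n. SUP lam\<in>\<Lambda>. \<bar>Flag w A \<alpha> D lam (phih n \<omega> lam) - Flag w A \<alpha> D lam (phis lam)\<bar>)
           \<longlonglongrightarrow> 0"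
proof -
  interpret M: prob_space M
    by (rule M)
  define \<beta> where "\<beta> n \<omega> = est (map (\<lambda>i. Z i \<omega>) [0..<n])" for n \<omega>
  define good where "good = {x. (\<forall>k. continuous_on Bset (\<lambda>b. q b x k))
      \<and> (AE \<omega> in M. \<forall>k. (\<lambda>n. q (\<beta> n \<omega>) x k) \<longlonglongrightarrow> \<eta> x k)}"
  have "AE x in distr D borel fst. \<forall>k. AE \<omega> in M. (\<lambda>n. q (\<beta> n \<omega>) x k) \<longlonglongrightarrow> \<eta> x k"
    using A2' unfolding \<beta>_def by (intro eventually_all_finite)
  then have good_AE: "AE x in distr D borel fst. x \<in> good"
    using A4 unfolding good_def by eventually_elim (simp add: eventually_all_finite)
  have "AE \<omega> in M. \<forall>xk\<in>good \<times> UNIV. (\<lambda>n. q (\<beta> n \<omega>) (fst xk) (snd xk)) \<longlonglongrightarrow> \<eta> (fst xk) (snd xk)"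
    by (rule AE_tendsto_continuous_family[OF Bcpt, of \<beta>]) (auto simp: \<beta>_def est good_def)
  moreover have "AE \<omega> in M. \<forall>k. (\<lambda>n. pi_hat Z n \<omega> k) \<longlonglongrightarrow> prior D k"
    using pi_hat_tendsto_prior[OF M iid ident] by (intro eventually_all_finite)
  ultimately show ?thesis
  proof eventually_elim
    case (elim \<omega>)
    show ?case
    proof (rule Flag_plugin_SUP_tendsto_zero[OF post _ wpos Lam,
          where p = "\<lambda>n. pi_hat Z n \<omega>" and r = "\<lambda>n. q (\<beta> n \<omega>)"])
      show "AE x in distr D borel fst. \<forall>k. (\<lambda>n. q (\<beta> n \<omega>) x k) \<longlonglongrightarrow> \<eta> x k"
        using good_AE by eventually_elim (use elim(1) in auto)
    qed (use prior phis phis_meas phih phih_meas Lam(1) elim(2) in \<open>auto simp: \<beta>_def\<close>)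
  qed
qed

end
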